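(* Let $c>1$ be an irrational number, let $q=[c]$ (so $q=c-\{c\}$), and let $d=\{c\}^{-1}$. For a positive integer $n$ let $c'_n=[c^{-1}n]$, and define $$f(n)=[c^{-1}(n+1)]-[c^{-1}n],\qquad g(n)=[\{c\}(n+1)]-[\{c\}n].$$ Let $k$ be a nonnegative integer. For a positive integer $m$ put $x=[mc]$. Then, as $m\to\infty$, \begin{align*} \sum_{n=1}^x \frac{q f(n)+f(n)g([ \frac {n}{c}]+k+1)}{n} =\;& 1+ \log m +\log c+ \gamma +\left\{\{c\}(k+1)\right\} \\ &- \sum_{n=1}^\infty \frac{c\{ c^{-1} (n+1)\}+\{ \{c\}(c'_{n+1}+k+1)\}}{n(n+1)}+O\left(\frac{1}{m}\right), \end{align*} where $\gamma$ is Euler's constant.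
   Context: $[x]$ is the greatest integer not exceeding $x$ and $\{x\}=x-[x]$. The function $f$ is the indicator function of the set $\{[cj]: j\ge 1\}$, and $g$ is the indicator function of $\{[dj]: j\ge1\}$. The implied constant in $O(1/m)$ may depend on $c$ and $k$. *)

theory Defs
  imports "HOL-Analysis.Analysis" "HOL-Library.Landau_Symbols"
begin

definition ff :: "real \<Rightarrow> int \<Rightarrow> int" where
  "ff c n = \<lfloor>(of_int n + 1) / c\<rfloor> - \<lfloor>of_int n / c\<rfloor>"

definition gg :: "real \<Rightarrow> int \<Rightarrow> int" where
  "gg c n = \<lfloor>frac c * (of_int n + 1)\<rfloor> - \<lfloor>frac c * of_int n\<rfloor>"

definition cprime :: "real \<Rightarrow> int \<Rightarrow> int" where
  "cprime c n = \<lfloor>of_int n / c\<rfloor>"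

end

theory Submission
  imports Defs "HOL-Real_Asymp.Real_Asymp"
begin

text \<open>
  Write \<open>w(n) = q f(n) + f(n) g([n/c] + k + 1)\<close>. Since \<open>f(n) \<in> {0, 1}\<close> and
  \<open>[c j] = q j + [{c} j]\<close>, the partial sums of \<open>w\<close> telescope:
  \<open>w(1) + \<dots> + w(n) = [c ([(n+1)/c] + k + 1)] - [c (k + 1)] = n + 1 + {{c}(k+1)} - \<rho>(n)\<close>,
  where \<open>0 \<le> \<rho>(n) \<le> c + 1\<close> is the numerator of the series in the statement.
  Abel summation turns \<open>\<Sum> w(n)/n\<close> into a harmonic sum plus the series
  \<open>\<Sum> \<rho>(n)/(n(n+1))\<close>; the harmonic sum gives \<open>log x + \<gamma>\<close> and
  \<open>log x = log m + log c + O(1/m)\<close>, all errors being \<open>O(1/x)\<close>.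
\<close>

lemma floor_mult_of_int:
  fixes c :: real
  shows "\<lfloor>c * of_int i\<rfloor> = \<lfloor>c\<rfloor> * i + \<lfloor>frac c * of_int i\<rfloor>"
proof -
  have "c * of_int i = frac c * of_int i + of_int (\<lfloor>c\<rfloor> * i)"
    by (simp add: frac_def algebra_simps)
  then show ?thesis
    by (metis floor_add_int add.commute)
qed

lemma of_int_floor_mult_of_int:
  fixes c :: real
  shows "of_int \<lfloor>c * of_int i\<rfloor> = c * of_int i - frac (frac c * of_int i)"
  by (simp add: floor_mult_of_int frac_def algebra_simps)

lemma sum_divide_by_parts:
  fixes F S :: "nat \<Rightarrow> real"
  assumes "S 0 = 0" and "\<And>n. F (Suc n) = S (Suc n) - S n"
  shows "(\<Sum>n=1..x. F n / real n) = S x / real x + (\<Sum>n=1..<x. S n / (real n * (real n + 1)))"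
proof (induction x)
  case (Suc x)
  show ?case
  proof (cases "x = 0")
    case True
    then show ?thesis using assms by simp
  next
    case False
    have "S x / real x - S x / (real x + 1) = S x / (real x * (real x + 1))"
      using False by (simp add: field_simps)
    moreover have "F (Suc x) / real (Suc x) = S (Suc x) / real (Suc x) - S x / (real x + 1)"
      by (simp add: assms(2) diff_divide_distrib)
    ultimately show ?thesis
      using Suc.IH False by simp
  qed
qed simp

lemma sum_inverse_mult_Suc:
  "(\<Sum>n=1..<Suc N. 1 / (real n * (real n + 1))) = 1 - 1 / (real N + 1)"
proof (induction N)
  case (Suc N)
  have "1 / (real N + 1) - 1 / (real N + 2) = 1 / ((real N + 1) * (real N + 2))"
    by (simp add: field_simps)
  moreover have "(\<Sum>n=1..<Suc (Suc N). 1 / (real n * (real n + 1)))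
      = 1 - 1 / (real N + 1) + 1 / ((real N + 1) * (real N + 2))"
    using Suc by (simp add: add.commute)
  ultimately show ?case
    by (simp add: add.commute)
qed simp

lemma suminf_tail_bounds:
  fixes a :: "nat \<Rightarrow> real"
  assumes nonneg: "\<And>i. 0 \<le> a i" and le: "\<And>i. a i \<le> B / ((real i + 1) * (real i + 2))"
  shows "0 \<le> suminf a - (\<Sum>i<N. a i)" and "suminf a - (\<Sum>i<N. a i) \<le> B / (real N + 1)"
proof -
  have telescope: "(\<lambda>i. B / ((real (i + M) + 1) * (real (i + M) + 2))) sums (B / (real M + 1))" for M
  proof -
    have "(\<lambda>i. B / (real (i + M) + 1)) \<longlonglongrightarrow> 0"
      by real_asymp
    then have "(\<lambda>i. B / (real (i + M) + 1) - B / (real (Suc i + M) + 1)) sums (B / (real (0 + M) + 1) - 0)"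
      by (rule telescope_sums')
    moreover have "B / (real (i + M) + 1) - B / (real (Suc i + M) + 1)
        = B / ((real (i + M) + 1) * (real (i + M) + 2))" for i
      by (simp add: field_simps)
    ultimately show ?thesis
      by simp
  qed
  have "summable (\<lambda>i. B / ((real i + 1) * (real i + 2)))"
    using sums_summable[OF telescope[of 0]] by simp
  then have summable: "summable a"
    by (rule summable_comparison_test') (use nonneg le in auto)
  have tail: "suminf a - (\<Sum>i<N. a i) = (\<Sum>i. a (i + N))"
    using suminf_split_initial_segment[OF summable, of N] by simp
  have summable_tail: "summable (\<lambda>i. a (i + N))"
    using summable by simp
  show "0 \<le> suminf a - (\<Sum>i<N. a i)"
    unfolding tail using nonneg by (intro suminf_nonneg summable_tail)
  show "suminf a - (\<Sum>i<N. a i) \<le> B / (real N + 1)"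
    unfolding tail
    by (rule sums_le[OF _ summable_sums[OF summable_tail] telescope[of N]]) (rule le)
qed

lemma ln_minus_ln_floor_bounds:
  fixes y :: real
  assumes "y \<ge> 1"
  shows "0 \<le> ln y - ln \<lfloor>y\<rfloor>" and "ln y - ln \<lfloor>y\<rfloor> \<le> 1 / \<lfloor>y\<rfloor>"
proof -
  have pos: "of_int \<lfloor>y\<rfloor> \<ge> (1::real)"
    using assms by simp
  then have nonzero: "of_int \<lfloor>y\<rfloor> \<noteq> (0::real)"
    by linarith
  show "0 \<le> ln y - ln \<lfloor>y\<rfloor>"
    using pos by simp
  have "ln (y / \<lfloor>y\<rfloor>) \<le> y / \<lfloor>y\<rfloor> - 1"
    using pos assms by (intro ln_le_minus_one) simp
  also have "\<dots> = (y - \<lfloor>y\<rfloor>) / \<lfloor>y\<rfloor>"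
    using nonzero by (simp add: diff_divide_distrib)
  also have "\<dots> \<le> 1 / \<lfloor>y\<rfloor>"
    using pos by (intro divide_right_mono) linarith+
  finally show "ln y - ln \<lfloor>y\<rfloor> \<le> 1 / \<lfloor>y\<rfloor>"
    using pos assms by (simp add: ln_div)
qed

lemma euler_mascheroni_minus_harm_bounds:
  assumes "N \<ge> 1"
  shows "0 \<le> euler_mascheroni - (harm N - ln (real N + 1))"
    and "euler_mascheroni - (harm N - ln (real N + 1)) \<le> 1 / (real N + 1)"
proof -
  have "inverse (real (2 * N)) \<le> 1 / (real N + 1)"
    using assms by (simp add: field_simps)
  moreover have "0 \<le> inverse (real (2 * (N + 1)))"
    by simp
  moreover have "ln (real (Suc N)) = ln (real N + 1)"
    by simp
  ultimately show "0 \<le> euler_mascheroni - (harm N - ln (real N + 1))"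
    and "euler_mascheroni - (harm N - ln (real N + 1)) \<le> 1 / (real N + 1)"
    using euler_mascheroni_bounds[OF assms] by (simp_all only: atLeastAtMost_iff) linarith+
qed

definition weight :: "real \<Rightarrow> nat \<Rightarrow> nat \<Rightarrow> real" where
  "weight c k n = of_int \<lfloor>c\<rfloor> * of_int (ff c (int n))
      + of_int (ff c (int n)) * of_int (gg c (\<lfloor>real n / c\<rfloor> + int k + 1))"

definition weight_sum :: "real \<Rightarrow> nat \<Rightarrow> nat \<Rightarrow> int" where
  "weight_sum c k n = \<lfloor>c * of_int (\<lfloor>(real n + 1) / c\<rfloor> + int k + 1)\<rfloor> - \<lfloor>c * of_int (int k + 1)\<rfloor>"

definition weight_sum_defect :: "real \<Rightarrow> nat \<Rightarrow> nat \<Rightarrow> real" where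
  "weight_sum_defect c k n = c * frac ((real n + 1) / c)
      + frac (frac c * (of_int (cprime c (int n + 1)) + real k + 1))"

lemma weight_sum_0:
  assumes "c > 1"
  shows "weight_sum c k 0 = 0"
proof -
  have "\<lfloor>1 / c\<rfloor> = 0"
    using assms by (simp add: floor_eq_iff)
  then show ?thesis
    by (simp add: weight_sum_def)
qed

lemma weight_sum_Suc:
  assumes "c > 1"
  shows "of_int (weight_sum c k (Suc n)) - of_int (weight_sum c k n) = weight c k (Suc n)"
proof -
  define J where "J = \<lfloor>real (Suc n) / c\<rfloor>"
  define J' where "J' = \<lfloor>(real (Suc n) + 1) / c\<rfloor>"
  have ff: "ff c (int (Suc n)) = J' - J"
    by (simp add: ff_def J_def J'_def)
  have diff: "weight_sum c k (Suc n) - weight_sum c k n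
      = \<lfloor>c * of_int (J' + int k + 1)\<rfloor> - \<lfloor>c * of_int (J + int k + 1)\<rfloor>"
    by (simp add: weight_sum_def J_def J'_def add.commute)
  have "J \<le> J'"
    unfolding J_def J'_def using assms by (intro floor_mono divide_right_mono) auto
  moreover have "(real (Suc n) + 1) / c \<le> real (Suc n) / c + 1"
    using assms by (simp add: field_simps)
  then have "J' \<le> \<lfloor>real (Suc n) / c + 1\<rfloor>"
    unfolding J'_def by (rule floor_mono)
  then have "J' \<le> J + 1"
    by (simp add: J_def)
  ultimately consider "J' = J" | "J' = J + 1"
    by linarith
  then show ?thesis
  proof cases
    case 1
    then show ?thesis
      unfolding weight_def ff using diff by simp
  next
    case 2
    have "gg c (J + int k + 1) = \<lfloor>frac c * of_int (J + int k + 2)\<rfloor> - \<lfloor>frac c * of_int (J + int k + 1)\<rfloor>"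
      by (simp add: gg_def add.assoc)
    then have "weight_sum c k (Suc n) - weight_sum c k n = \<lfloor>c\<rfloor> + gg c (J + int k + 1)"
      unfolding diff 2 floor_mult_of_int[of c] by (simp add: algebra_simps)
    then have "of_int (weight_sum c k (Suc n)) - of_int (weight_sum c k n)
        = (of_int (\<lfloor>c\<rfloor> + gg c (J + int k + 1)) :: real)"
      by (metis of_int_diff)
    then show ?thesis
      unfolding weight_def ff 2 J_def[symmetric] by simp
  qed
qed

lemma of_int_weight_sum:
  assumes "c > 1"
  shows "of_int (weight_sum c k n) = real n + 1 + frac (frac c * (real k + 1)) - weight_sum_defect c k n"
proof -
  define J where "J = \<lfloor>(real n + 1) / c\<rfloor>"
  have "c * of_int J = real n + 1 - c * frac ((real n + 1) / c)"
    using assms by (simp add: J_def frac_def field_simps)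
  moreover have "cprime c (int n + 1) = J"
    by (simp add: cprime_def J_def add.commute)
  moreover have "of_int (weight_sum c k n)
      = c * of_int (J + int k + 1) - frac (frac c * of_int (J + int k + 1))
        - (c * of_int (int k + 1) - frac (frac c * of_int (int k + 1)))"
    unfolding weight_sum_def J_def[symmetric] by (simp only: of_int_diff of_int_floor_mult_of_int)
  ultimately show ?thesis
    unfolding weight_sum_defect_def by (simp add: algebra_simps)
qed

lemma weight_sum_defect_bounds:
  assumes "c > 1"
  shows "0 \<le> weight_sum_defect c k n" and "weight_sum_defect c k n \<le> c + 1"
proof -
  let ?u = "frac ((real n + 1) / c)"
  have "0 \<le> ?u" "?u \<le> 1"
    by (simp_all add: frac_lt_1 less_imp_le)
  then have "0 \<le> c * ?u" "c * ?u \<le> c"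
    using assms by (simp_all add: mult_left_le)
  moreover have "0 \<le> frac (frac c * (of_int (cprime c (int n + 1)) + real k + 1))"
    and "frac (frac c * (of_int (cprime c (int n + 1)) + real k + 1)) \<le> 1"
    by (simp_all add: frac_lt_1 less_imp_le)
  ultimately show "0 \<le> weight_sum_defect c k n" and "weight_sum_defect c k n \<le> c + 1"
    unfolding weight_sum_defect_def by linarith+
qed

lemma sum_weight_divide_eq:
  fixes k :: nat
  assumes "c > 1"
  defines "a \<equiv> \<lambda>i. weight_sum_defect c k (Suc i) / (real (Suc i) * (real (Suc i) + 1))"
  shows "(\<Sum>n=1..Suc N. weight c k n / real n)
    = 1 + harm N + frac (frac c * (real k + 1)) - (\<Sum>i<N. a i)
      + (1 - weight_sum_defect c k (Suc N)) / (real N + 1)"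
proof -
  let ?\<phi> = "frac (frac c * (real k + 1))" and ?\<rho> = "weight_sum_defect c k"
  define S where "S n = real_of_int (weight_sum c k n)" for n
  have S: "S n = real n + 1 + ?\<phi> - ?\<rho> n" for n
    unfolding S_def using assms(1) by (rule of_int_weight_sum)
  have by_parts: "(\<Sum>n=1..Suc N. weight c k n / real n)
      = S (Suc N) / real (Suc N) + (\<Sum>n=1..<Suc N. S n / (real n * (real n + 1)))"
    by (rule sum_divide_by_parts) (simp_all add: S_def weight_sum_0 weight_sum_Suc assms(1))
  have "(\<Sum>n=1..<Suc N. S n / (real n * (real n + 1)))
      = (\<Sum>n=1..<Suc N. 1 / real n + ?\<phi> * (1 / (real n * (real n + 1)))
          - ?\<rho> n / (real n * (real n + 1)))"
  proof (rule sum.cong[OF refl])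
    fix n
    assume "n \<in> {1..<Suc N}"
    then show "S n / (real n * (real n + 1))
        = 1 / real n + ?\<phi> * (1 / (real n * (real n + 1))) - ?\<rho> n / (real n * (real n + 1))"
      unfolding S by (simp add: divide_simps)
  qed
  then have split: "(\<Sum>n=1..<Suc N. S n / (real n * (real n + 1)))
      = (\<Sum>n=1..<Suc N. 1 / real n) + ?\<phi> * (\<Sum>n=1..<Suc N. 1 / (real n * (real n + 1)))
        - (\<Sum>n=1..<Suc N. ?\<rho> n / (real n * (real n + 1)))"
    by (simp only: sum.distrib sum_subtractf sum_distrib_left)
  have harm: "(\<Sum>n=1..<Suc N. 1 / real n) = harm N"
    by (simp add: harm_def atLeastLessThanSuc_atLeastAtMost inverse_eq_divide)
  have shift: "(\<Sum>n=1..<Suc N. ?\<rho> n / (real n * (real n + 1))) = (\<Sum>i<N. a i)"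
    unfolding a_def atLeast0LessThan[symmetric] One_nat_def by (rule sum.shift_bounds_Suc_ivl)
  have last: "S (Suc N) / real (Suc N) = 1 + (1 + ?\<phi> - ?\<rho> (Suc N)) / (real N + 1)"
    unfolding S by (simp add: field_simps)
  show ?thesis
    unfolding by_parts split harm shift sum_inverse_mult_Suc last
    by (simp add: add_divide_distrib diff_divide_distrib right_diff_distrib)
qed

lemma sum_weight_divide_approx:
  fixes k :: nat
  assumes c: "c > 1" and y: "y \<ge> 2"
  defines "a \<equiv> \<lambda>i. weight_sum_defect c k (Suc i) / (real (Suc i) * (real (Suc i) + 1))"
  shows "\<bar>(\<Sum>n=1..nat \<lfloor>y\<rfloor>. weight c k n / real n)
      - (1 + ln y + euler_mascheroni + frac (frac c * (real k + 1)) - suminf a)\<bar> \<le> (c + 2) / \<lfloor>y\<rfloor>"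
proof -
  have "nat \<lfloor>y\<rfloor> \<ge> 2"
    using y by (simp add: le_nat_iff le_floor_iff)
  define N where "N = nat \<lfloor>y\<rfloor> - 1"
  have N: "nat \<lfloor>y\<rfloor> = Suc N" and "N \<ge> 1"
    using \<open>nat \<lfloor>y\<rfloor> \<ge> 2\<close> by (simp_all add: N_def)
  have "of_int \<lfloor>y\<rfloor> = real (nat \<lfloor>y\<rfloor>)"
    using y by simp
  then have floor: "of_int \<lfloor>y\<rfloor> = real N + 1"
    by (simp add: N)
  define u where "u = 1 / (real N + 1)"
  have tail: "0 \<le> suminf a - (\<Sum>i<N. a i)" "suminf a - (\<Sum>i<N. a i) \<le> (c + 1) / (real N + 1)"
  proof -
    have "0 \<le> a i" for i
      unfolding a_def using weight_sum_defect_bounds[OF c] by simp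
    moreover have "a i \<le> (c + 1) / ((real i + 1) * (real i + 2))" for i
    proof -
      have "real (Suc i) * (real (Suc i) + 1) = (real i + 1) * (real i + 2)"
        by (simp add: add.commute)
      then show ?thesis
        unfolding a_def by (simp only:) (rule divide_right_mono, simp_all add: weight_sum_defect_bounds[OF c])
    qed
    ultimately show "0 \<le> suminf a - (\<Sum>i<N. a i)" "suminf a - (\<Sum>i<N. a i) \<le> (c + 1) / (real N + 1)"
      by (rule suminf_tail_bounds)+
  qed
  have "0 \<le> ln y - ln (real N + 1)" "ln y - ln (real N + 1) \<le> u"
    using ln_minus_ln_floor_bounds[of y] y by (simp_all add: floor u_def)
  moreover have "0 \<le> euler_mascheroni - (harm N - ln (real N + 1))"
    "euler_mascheroni - (harm N - ln (real N + 1)) \<le> u"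
    using euler_mascheroni_minus_harm_bounds[OF \<open>N \<ge> 1\<close>] by (simp_all add: u_def)
  moreover have "0 \<le> u"
    by (simp add: u_def)
  then have "0 \<le> weight_sum_defect c k (Suc N) * u" "weight_sum_defect c k (Suc N) * u \<le> (c + 1) * u"
    using weight_sum_defect_bounds[OF c, of k "Suc N"] by (simp_all add: mult_right_mono)
  moreover have "(c + 1) / (real N + 1) = c * u + u" "(c + 1) * u = c * u + u"
    "(c + 2) / (real N + 1) = c * u + 2 * u"
    "(1 - weight_sum_defect c k (Suc N)) / (real N + 1) = u - weight_sum_defect c k (Suc N) * u"
    by (simp_all add: u_def add_divide_distrib diff_divide_distrib distrib_right)
  ultimately show ?thesis
    unfolding N floor sum_weight_divide_eq[OF c, of k N, folded a_def] abs_le_iff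
    using tail by linarith
qed

theorem theorem2:
  fixes c :: real and k :: nat
  assumes "c > 1" and "c \<notin> \<rat>"
  shows "(\<lambda>m::nat.
      (\<Sum>n = 1..nat \<lfloor>real m * c\<rfloor>.
          (of_int \<lfloor>c\<rfloor> * of_int (ff c (int n))
            + of_int (ff c (int n)) * of_int (gg c (\<lfloor>real n / c\<rfloor> + int k + 1))) / real n)
      - (1 + ln (real m) + ln c + euler_mascheroni + frac (frac c * (real k + 1))
         - (\<Sum>n. (c * frac ((real (Suc n) + 1) / c)
                    + frac (frac c * (of_int (cprime c (int (Suc n) + 1)) + real k + 1)))
                  / (real (Suc n) * (real (Suc n) + 1)))))
    \<in> O(\<lambda>m. 1 / real m)"
  unfolding weight_def[symmetric] weight_sum_defect_def[symmetric]
proof (intro bigoI[where c = "c + 2"] eventually_at_top_linorderI[of 2])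
  fix m :: nat
  assume "m \<ge> 2"
  have mc: "real m \<le> real m * c"
    using assms(1) mult_left_mono[of 1 c "real m"] by simp
  then have y: "real m * c \<ge> 2"
    using \<open>m \<ge> 2\<close> by linarith
  have "int m \<le> \<lfloor>real m * c\<rfloor>"
    using mc by (simp add: le_floor_iff)
  then have "real m \<le> of_int \<lfloor>real m * c\<rfloor>"
    by linarith
  then have "(c + 2) / of_int \<lfloor>real m * c\<rfloor> \<le> (c + 2) * norm (1 / real m)"
    using \<open>m \<ge> 2\<close> assms(1) divide_left_mono[of "real m" _ "c + 2"] by simp
  moreover have "ln (real m * c) = ln (real m) + ln c"
    using \<open>m \<ge> 2\<close> assms(1) by (simp add: ln_mult)
  ultimately show "norm ((\<Sum>n = 1..nat \<lfloor>real m * c\<rfloor>. weight c k n / real n)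
      - (1 + ln (real m) + ln c + euler_mascheroni + frac (frac c * (real k + 1))
         - (\<Sum>n. weight_sum_defect c k (Suc n) / (real (Suc n) * (real (Suc n) + 1)))))
      \<le> (c + 2) * norm (1 / real m)"
    using sum_weight_divide_approx[OF assms(1) y, of k] by (simp add: add.assoc)
qed

end
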